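(* Let $\{X^{(1)}_\ell\}_{\ell\ge1}$ and $\{X^{(2)}_\ell\}_{\ell\ge1}$ be mutually independent real random variables, where $X^{(b)}_\ell$ has mean $\mu_b$ for all $\ell$, with $\mu_1>0>\mu_2$, and suppose there is $\beta>0$ such that for all $b\in\{1,2\}$, $\ell\in\mathbb N$ and $v\in\mathbb R$, $$\mathbb P[X^{(b)}_\ell\ge v]\le e^{-\beta|v-\mu_b|_+^2},\qquad \mathbb P[X^{(b)}_\ell\le v]\le e^{-\beta|\mu_b-v|_+^2}.$$ Define $Y_1=X^{(2)}_1$ and, for $\ell\ge2$, $Y_\ell=Y_{\ell-1}+X^{(1)}_\ell$ if $Y_{\ell-1}<0$ and $Y_\ell=Y_{\ell-1}+X^{(2)}_\ell$ if $Y_{\ell-1}\ge0$. Let $c\ge1$ satisfy $$\min\{\mu_1,-\mu_2\}\ge\sqrt{\pi/\beta}\;e^{c^2/4}.$$ Then for every $\ell\in\mathbb N$ and every $v\in\mathbb R$, $$\mathbb P[|Y_\ell|\ge v]\le2\,e^{-c\sqrt\beta\,(v-\mu_1+\mu_2)}.$$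
   Context: $|a|_+=\max\{0,a\}$. *)

theory Defs
  imports "HOL-Probability.Probability"
begin

text \<open>The switching walk: X b l is the l-th variable of stream b (b = 1 or 2, l \<ge> 1).
  Yw X l is Y_l for l \<ge> 1; the value at l = 0 is a dummy 0.\<close>
fun Yw :: "(nat \<Rightarrow> nat \<Rightarrow> 'a \<Rightarrow> real) \<Rightarrow> nat \<Rightarrow> 'a \<Rightarrow> real" where
  "Yw X 0 \<omega> = 0"
| "Yw X (Suc 0) \<omega> = X 2 1 \<omega>"
| "Yw X (Suc (Suc n)) \<omega> =
     (if Yw X (Suc n) \<omega> < 0 then Yw X (Suc n) \<omega> + X 1 (Suc (Suc n)) \<omega>
      else Yw X (Suc n) \<omega> + X 2 (Suc (Suc n)) \<omega>)"

end

theory Submission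
  imports Defs
begin

text \<open>If \<open>Y l \<ge> v\<close>, look back to the last time \<open>k + 1 \<le> l\<close> at which the walk was negative:
  from then on it took one step of \<open>X 1\<close> followed by steps of \<open>X 2\<close> only (if it never was
  negative, it took steps of \<open>X 2\<close> only).  Each such run is a sum of independent sub-Gaussian
  variables, so Chernoff's bound at \<open>\<theta> = c \<surd>\<beta>\<close>, with moment generating functions computed
  from the tails by a Gaussian integral, bounds its probability.  The negative drift \<open>\<mu>2\<close>
  makes these bounds decay geometrically in the length of the run, and the hypothesis on
  \<open>min \<mu>1 (- \<mu>2)\<close> makes the resulting geometric series sum to at most
  \<open>exp (\<theta> (\<mu>1 - \<mu>2))\<close>.  The lower tail is symmetric.\<close>

lemma exp_le_one_plus_nn_integral:
  fixes \<theta> z :: real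
  assumes "\<theta> > 0"
  shows "ennreal (exp (\<theta> * z))
    \<le> 1 + (\<integral>\<^sup>+t. ennreal (\<theta> * exp (\<theta> * t)) * indicator {0..z} t \<partial>lborel)"
proof (cases "z \<ge> 0")
  case True
  have "(\<integral>\<^sup>+t. ennreal (\<theta> * exp (\<theta> * t)) * indicator {0..z} t \<partial>lborel)
      = exp (\<theta> * z) - exp (\<theta> * 0)"
    by (rule nn_integral_FTC_Icc) (use assms True in \<open>auto intro!: derivative_eq_intros\<close>)
  moreover have "exp (\<theta> * z) \<ge> 1"
    using assms True by simp
  ultimately show ?thesis
    using ennreal_plus[of 1 "exp (\<theta> * z) - 1"] by simp
next
  case False
  then have "exp (\<theta> * z) \<le> 1"
    using assms by (simp add: mult_nonneg_nonpos)
  then show ?thesis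
    by (simp add: add_increasing2 ennreal_leI)
qed

lemma nn_integral_exp_linear_minus_quadratic:
  fixes \<theta> \<beta> :: real
  assumes "\<beta> > 0"
  shows "(\<integral>\<^sup>+t. ennreal (exp (\<theta> * t - \<beta> * t\<^sup>2)) \<partial>lborel)
    = ennreal (sqrt (pi / \<beta>) * exp (\<theta>\<^sup>2 / (4 * \<beta>)))"
proof -
  define \<sigma> where "\<sigma> = 1 / sqrt (2 * \<beta>)"
  define m where "m = \<theta> / (2 * \<beta>)"
  define C where "C = sqrt (pi / \<beta>) * exp (\<theta>\<^sup>2 / (4 * \<beta>))"
  have \<sigma>: "\<sigma> > 0"
    using assms by (simp add: \<sigma>_def)
  have C: "C \<ge> 0"
    using assms by (simp add: C_def)
  have density: "exp (\<theta> * t - \<beta> * t\<^sup>2) = C * normal_density m \<sigma> t" for t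
  proof -
    have "\<theta> * t - \<beta> * t\<^sup>2 = \<theta>\<^sup>2 / (4 * \<beta>) + (- (t - m)\<^sup>2 / (2 * \<sigma>\<^sup>2))"
      using assms by (simp add: \<sigma>_def m_def field_simps power2_eq_square)
    moreover have "sqrt (2 * pi * \<sigma>\<^sup>2) = sqrt (pi / \<beta>)"
      using assms by (simp add: \<sigma>_def field_simps)
    ultimately show ?thesis
      using assms by (simp add: C_def normal_density_def flip: exp_add)
  qed
  have "(\<integral>\<^sup>+t. ennreal (exp (\<theta> * t - \<beta> * t\<^sup>2)) \<partial>lborel)
      = (\<integral>\<^sup>+t. ennreal C * ennreal (normal_density m \<sigma> t) \<partial>lborel)"
    using C by (intro nn_integral_cong) (simp add: density ennreal_mult)
  also have "\<dots> = ennreal C * (\<integral>\<^sup>+t. ennreal (normal_density m \<sigma> t) \<partial>lborel)"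
    by (rule nn_integral_cmult) simp
  also have "(\<integral>\<^sup>+t. ennreal (normal_density m \<sigma> t) \<partial>lborel) = 1"
    using integrable_normal_density[OF \<sigma>] integral_normal_density[OF \<sigma>]
    by (simp add: nn_integral_eq_integral)
  finally show ?thesis
    by (simp add: C_def)
qed

lemma (in prob_space) nn_integral_exp_le_of_subgaussian_tail:
  fixes W :: "'a \<Rightarrow> real"
  assumes W[measurable]: "W \<in> borel_measurable M" and "\<beta> > 0" and "\<theta> > 0"
    and tail: "\<And>t. t \<ge> 0 \<Longrightarrow> prob {\<omega>\<in>space M. W \<omega> \<ge> m + t} \<le> exp (- \<beta> * t\<^sup>2)"
  shows "(\<integral>\<^sup>+\<omega>. ennreal (exp (\<theta> * W \<omega>)) \<partial>M)
    \<le> ennreal (exp (\<theta> * m) * (1 + \<theta> * sqrt (pi / \<beta>) * exp (\<theta>\<^sup>2 / (4 * \<beta>))))"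
proof -
  interpret P: pair_sigma_finite M lborel
    by (simp add: pair_sigma_finite_def lborel.sigma_finite_measure_axioms sigma_finite_measure_axioms)
  define K where "K = \<theta> * sqrt (pi / \<beta>) * exp (\<theta>\<^sup>2 / (4 * \<beta>))"
  have K: "K \<ge> 0"
    using \<open>\<theta> > 0\<close> \<open>\<beta> > 0\<close> by (simp add: K_def)
  define g where "g \<omega> t = (if 0 \<le> t \<and> t \<le> W \<omega> - m then ennreal (\<theta> * exp (\<theta> * t)) else 0)"
    for \<omega> t
  have g[measurable]: "case_prod g \<in> borel_measurable (M \<Otimes>\<^sub>M lborel)"
    unfolding g_def by measurable
  \<comment> \<open>\<open>exp (\<theta> (W - m)) \<le> 1 + \<integral> over [0, W - m] of \<theta> exp (\<theta> t) dt\<close>; after Tonelli the point \<open>t \<ge> 0\<close>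
    contributes \<open>\<theta> exp (\<theta> t) P(W \<ge> m + t) \<le> \<theta> exp (\<theta> t - \<beta> t\<^sup>2)\<close>\<close>
  have "(\<integral>\<^sup>+\<omega>. ennreal (exp (\<theta> * W \<omega>)) \<partial>M)
      \<le> (\<integral>\<^sup>+\<omega>. ennreal (exp (\<theta> * m)) * (1 + (\<integral>\<^sup>+t. g \<omega> t \<partial>lborel)) \<partial>M)"
  proof (intro nn_integral_mono)
    fix \<omega>
    have "ennreal (exp (\<theta> * W \<omega>)) = ennreal (exp (\<theta> * m)) * ennreal (exp (\<theta> * (W \<omega> - m)))"
      by (simp add: ennreal_mult[symmetric] algebra_simps flip: exp_add)
    also have "\<dots> \<le> ennreal (exp (\<theta> * m))
        * (1 + (\<integral>\<^sup>+t. ennreal (\<theta> * exp (\<theta> * t)) * indicator {0..W \<omega> - m} t \<partial>lborel))"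
      by (intro mult_left_mono exp_le_one_plus_nn_integral \<open>\<theta> > 0\<close>) simp
    also have "(\<integral>\<^sup>+t. ennreal (\<theta> * exp (\<theta> * t)) * indicator {0..W \<omega> - m} t \<partial>lborel)
        = (\<integral>\<^sup>+t. g \<omega> t \<partial>lborel)"
      by (intro nn_integral_cong) (simp add: g_def indicator_def)
    finally show "ennreal (exp (\<theta> * W \<omega>))
        \<le> ennreal (exp (\<theta> * m)) * (1 + (\<integral>\<^sup>+t. g \<omega> t \<partial>lborel))" .
  qed
  also have "\<dots> = ennreal (exp (\<theta> * m)) * (1 + (\<integral>\<^sup>+\<omega>. (\<integral>\<^sup>+t. g \<omega> t \<partial>lborel) \<partial>M))"
    using lborel.borel_measurable_nn_integral_fst[OF g]
    by (subst nn_integral_cmult) (auto simp: nn_integral_add emeasure_space_1)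
  also have "(\<integral>\<^sup>+\<omega>. (\<integral>\<^sup>+t. g \<omega> t \<partial>lborel) \<partial>M) = (\<integral>\<^sup>+t. (\<integral>\<^sup>+\<omega>. g \<omega> t \<partial>M) \<partial>lborel)"
    using P.Fubini'[OF g] by simp
  also have "\<dots> \<le> (\<integral>\<^sup>+t. ennreal \<theta> * ennreal (exp (\<theta> * t - \<beta> * t\<^sup>2)) \<partial>lborel)"
  proof (intro nn_integral_mono)
    fix t :: real
    show "(\<integral>\<^sup>+\<omega>. g \<omega> t \<partial>M) \<le> ennreal \<theta> * ennreal (exp (\<theta> * t - \<beta> * t\<^sup>2))"
    proof (cases "t \<ge> 0")
      case True
      have "(\<integral>\<^sup>+\<omega>. g \<omega> t \<partial>M)
          = (\<integral>\<^sup>+\<omega>. ennreal (\<theta> * exp (\<theta> * t)) * indicator {\<omega>\<in>space M. W \<omega> \<ge> m + t} \<omega> \<partial>M)"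
        using True by (intro nn_integral_cong) (auto simp: g_def indicator_def)
      also have "\<dots> = ennreal (\<theta> * exp (\<theta> * t)) * prob {\<omega>\<in>space M. W \<omega> \<ge> m + t}"
        by (subst nn_integral_cmult_indicator) (auto simp: emeasure_eq_measure)
      also have "\<dots> \<le> ennreal (\<theta> * exp (\<theta> * t)) * ennreal (exp (- \<beta> * t\<^sup>2))"
        using tail[OF True] by (intro mult_left_mono) auto
      also have "\<dots> = ennreal \<theta> * ennreal (exp (\<theta> * t - \<beta> * t\<^sup>2))"
        using \<open>\<theta> > 0\<close> by (simp add: ennreal_mult[symmetric] exp_diff exp_minus field_simps)
      finally show ?thesis .
    qed (simp add: g_def)
  qed
  also have "\<dots> = ennreal \<theta> * (\<integral>\<^sup>+t. ennreal (exp (\<theta> * t - \<beta> * t\<^sup>2)) \<partial>lborel)"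
    by (rule nn_integral_cmult) simp
  also have "\<dots> = ennreal K"
    using \<open>\<theta> > 0\<close> \<open>\<beta> > 0\<close>
    by (simp add: K_def nn_integral_exp_linear_minus_quadratic ennreal_mult mult.assoc)
  finally have "(\<integral>\<^sup>+\<omega>. ennreal (exp (\<theta> * W \<omega>)) \<partial>M) \<le> ennreal (exp (\<theta> * m)) * (1 + ennreal K)"
    by (simp add: mult_left_mono add_left_mono)
  also have "\<dots> = ennreal (exp (\<theta> * m) * (1 + K))"
    using K ennreal_plus[of 1 K] by (simp add: ennreal_mult)
  finally show ?thesis
    by (simp add: K_def)
qed

lemma (in prob_space) nn_integral_exp_le_of_two_sided_subgaussian_tail:
  fixes W :: "'a \<Rightarrow> real"
  assumes W[measurable]: "W \<in> borel_measurable M" and "\<beta> > 0" and "\<theta> > 0" and "s \<in> {1, -1}"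
    and up: "\<And>v. prob {\<omega>\<in>space M. W \<omega> \<ge> v} \<le> exp (- \<beta> * (max 0 (v - m))\<^sup>2)"
    and low: "\<And>v. prob {\<omega>\<in>space M. W \<omega> \<le> v} \<le> exp (- \<beta> * (max 0 (m - v))\<^sup>2)"
  shows "(\<integral>\<^sup>+\<omega>. ennreal (exp (\<theta> * (s * W \<omega>))) \<partial>M)
    \<le> ennreal (exp (\<theta> * (s * m)) * (1 + \<theta> * sqrt (pi / \<beta>) * exp (\<theta>\<^sup>2 / (4 * \<beta>))))"
proof -
  have "prob {\<omega>\<in>space M. s * W \<omega> \<ge> s * m + t} \<le> exp (- \<beta> * t\<^sup>2)" if "t \<ge> 0" for t
  proof (cases "s = 1")
    case True
    then show ?thesis
      using up[of "m + t"] that by simp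
  next
    case False
    then have "s = -1"
      using \<open>s \<in> {1, -1}\<close> by simp
    moreover have "{\<omega>\<in>space M. - W \<omega> \<ge> - m + t} = {\<omega>\<in>space M. W \<omega> \<le> m - t}"
      by auto
    ultimately show ?thesis
      using low[of "m - t"] that by simp
  qed
  then show ?thesis
    by (intro nn_integral_exp_le_of_subgaussian_tail) (use assms in auto)
qed

lemma (in prob_space) Chernoff_ineq_indep_sum:
  fixes Z :: "'i \<Rightarrow> 'a \<Rightarrow> real"
  assumes indep: "indep_vars (\<lambda>_. borel) Z J" and "finite J" and "\<theta> > 0"
    and mgf: "\<And>i. i \<in> J \<Longrightarrow> (\<integral>\<^sup>+\<omega>. ennreal (exp (\<theta> * Z i \<omega>)) \<partial>M) \<le> ennreal (B i)"
    and B: "\<And>i. i \<in> J \<Longrightarrow> 0 \<le> B i"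
  shows "prob {\<omega>\<in>space M. v \<le> (\<Sum>i\<in>J. Z i \<omega>)} \<le> exp (- \<theta> * v) * (\<Prod>i\<in>J. B i)"
proof -
  have [measurable]: "Z i \<in> borel_measurable M" if "i \<in> J" for i
    using indep that unfolding indep_vars_def by auto
  have indep_exp: "indep_vars (\<lambda>_. borel) (\<lambda>i \<omega>. ennreal (exp (\<theta> * Z i \<omega>))) J"
    by (rule indep_vars_compose2[OF indep]) auto
  have "emeasure M {\<omega>\<in>space M. v \<le> (\<Sum>i\<in>J. Z i \<omega>)}
      \<le> ennreal (exp (- \<theta> * v))
        * (\<integral>\<^sup>+\<omega>. ennreal (exp (\<theta> * (\<Sum>i\<in>J. Z i \<omega>))) * indicator (space M) \<omega> \<partial>M)"
    by (rule Chernoff_ineq_nn_integral_ge[OF \<open>\<theta> > 0\<close>]) auto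
  also have "(\<integral>\<^sup>+\<omega>. ennreal (exp (\<theta> * (\<Sum>i\<in>J. Z i \<omega>))) * indicator (space M) \<omega> \<partial>M)
      = (\<integral>\<^sup>+\<omega>. (\<Prod>i\<in>J. ennreal (exp (\<theta> * Z i \<omega>))) \<partial>M)"
    by (intro nn_integral_cong) (simp add: sum_distrib_left exp_sum \<open>finite J\<close> prod_ennreal)
  also have "\<dots> = (\<Prod>i\<in>J. \<integral>\<^sup>+\<omega>. ennreal (exp (\<theta> * Z i \<omega>)) \<partial>M)"
    by (rule indep_vars_nn_integral[OF \<open>finite J\<close> indep_exp]) simp
  also have "\<dots> \<le> (\<Prod>i\<in>J. ennreal (B i))"
    by (intro prod_mono_ennreal mgf)
  also have "\<dots> = ennreal (\<Prod>i\<in>J. B i)"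
    using B by (simp add: prod_ennreal)
  finally have "emeasure M {\<omega>\<in>space M. v \<le> (\<Sum>i\<in>J. Z i \<omega>)}
      \<le> ennreal (exp (- \<theta> * v) * (\<Prod>i\<in>J. B i))"
    using B by (simp add: ennreal_mult prod_nonneg mult_left_mono)
  then show ?thesis
    using B by (simp add: emeasure_eq_measure prod_nonneg)
qed

lemma exp_ge_3_add_double_self:
  fixes A :: real
  assumes "A \<ge> 2.2"
  shows "3 + 2 * A \<le> exp A"
proof -
  have "7.4 \<le> (1 + 2.2 / real 20) ^ 20"
    by (simp add: power_numeral_reduce)
  also have "\<dots> \<le> exp (2.2::real)"
    by (rule exp_ge_one_plus_x_over_n_power_n) auto
  finally have "7.4 * (1 + (A - 2.2)) \<le> exp 2.2 * (1 + (A - 2.2))"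
    using assms by (intro mult_right_mono) auto
  also have "\<dots> \<le> exp 2.2 * exp (A - 2.2)"
    by (intro mult_left_mono exp_ge_add_one_self) auto
  also have "\<dots> = exp A"
    by (simp flip: exp_add)
  finally show ?thesis
    using assms by (simp add: algebra_simps)
qed

lemma geometric_sum_le_of_ge_3_add_double:
  fixes a E :: real
  assumes "0 \<le> a" and E: "3 + 2 * a \<le> E"
  shows "(1 + a) / E < 1" and "(1 + a) * (\<Sum>k<l. ((1 + a) / E) ^ k) \<le> E - 1"
proof -
  have "E > 0" and gap: "E - 1 - a > 0"
    using assms by linarith+
  then show q: "(1 + a) / E < 1"
    by (simp add: divide_less_eq)
  have "1 - (1 + a) / E = (E - 1 - a) / E"
    using \<open>E > 0\<close> by (simp add: field_simps)
  then have "(1 + a) / (1 - (1 + a) / E) = E * (1 + a) / (E - 1 - a)"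
    using \<open>E > 0\<close> gap by simp
  also have "\<dots> \<le> E - 1"
  proof -
    have "0 \<le> E * (E - 3 - 2 * a)"
      using E \<open>E > 0\<close> by simp
    then have "E * (1 + a) \<le> (E - 1) * (E - 1 - a)"
      using \<open>0 \<le> a\<close> by (simp add: algebra_simps)
    then show ?thesis
      using gap by (simp add: divide_le_eq)
  qed
  finally have bound: "(1 + a) / (1 - (1 + a) / E) \<le> E - 1" .
  have "(\<Sum>k<l. ((1 + a) / E) ^ k) \<le> 1 / (1 - (1 + a) / E)"
    using q \<open>0 \<le> a\<close> \<open>E > 0\<close> by (intro less_imp_le geometric_sum_less) auto
  then have "(1 + a) * (\<Sum>k<l. ((1 + a) / E) ^ k) \<le> (1 + a) / (1 - (1 + a) / E)"
    using \<open>0 \<le> a\<close> mult_left_mono[of _ _ "1 + a"] by fastforce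
  with bound show "(1 + a) * (\<Sum>k<l. ((1 + a) / E) ^ k) \<le> E - 1"
    by linarith
qed

lemma mult_sqrt_pi_exp_square_ge:
  fixes c :: real
  assumes "c \<ge> 1"
  shows "2.2 \<le> c * sqrt pi * exp (c\<^sup>2 / 4)"
proof -
  have "sqrt (1.77\<^sup>2) \<le> sqrt pi"
    using pi_approx(1) by (intro real_sqrt_le_mono) (simp add: power2_eq_square)
  then have sqrt_pi: "1.77 \<le> sqrt pi"
    by simp
  have "1.25 \<le> exp (1 / 4 :: real)"
    using exp_ge_add_one_self[of "1 / 4 :: real"] by simp
  also have "\<dots> \<le> exp (c\<^sup>2 / 4)"
    using one_le_power[OF assms, of 2] by simp
  finally have "1 * 1.77 * 1.25 \<le> c * sqrt pi * exp (c\<^sup>2 / 4)"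
    using assms sqrt_pi by (intro mult_mono) auto
  then show ?thesis
    by simp
qed

lemma Yw_Suc:
  "Yw X (Suc n) \<omega> = Yw X n \<omega> + (if Yw X n \<omega> < 0 then X 1 (Suc n) \<omega> else X 2 (Suc n) \<omega>)"
  by (cases n) auto

lemma Yw_le_run_sum:
  "Yw X l \<omega> \<le> (\<Sum>j\<in>{1..l}. X 2 j \<omega>) \<or>
   (\<exists>k<l. Yw X l \<omega> \<le> X 1 (Suc k) \<omega> + (\<Sum>j\<in>{Suc (Suc k)..l}. X 2 j \<omega>))"
proof (induction l)
  case (Suc l)
  show ?case
  proof (cases "Yw X l \<omega> < 0")
    case True
    then have "Yw X (Suc l) \<omega> \<le> X 1 (Suc l) \<omega> + (\<Sum>j\<in>{Suc (Suc l)..Suc l}. X 2 j \<omega>)"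
      by (simp add: Yw_Suc)
    then show ?thesis
      by blast
  next
    case False
    then have step: "Yw X (Suc l) \<omega> = Yw X l \<omega> + X 2 (Suc l) \<omega>"
      by (simp add: Yw_Suc)
    from Suc.IH show ?thesis
    proof
      assume "Yw X l \<omega> \<le> (\<Sum>j\<in>{1..l}. X 2 j \<omega>)"
      then show ?thesis
        by (simp add: step)
    next
      assume "\<exists>k<l. Yw X l \<omega> \<le> X 1 (Suc k) \<omega> + (\<Sum>j\<in>{Suc (Suc k)..l}. X 2 j \<omega>)"
      then obtain k where "k < l" and "Yw X l \<omega> \<le> X 1 (Suc k) \<omega> + (\<Sum>j\<in>{Suc (Suc k)..l}. X 2 j \<omega>)"
        by blast
      then have "Yw X (Suc l) \<omega> \<le> X 1 (Suc k) \<omega> + (\<Sum>j\<in>{Suc (Suc k)..Suc l}. X 2 j \<omega>)"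
        by (simp add: step)
      with \<open>k < l\<close> show ?thesis
        using less_SucI by blast
    qed
  qed
qed simp

lemma Yw_ge_run_sum:
  "Yw X l \<omega> \<ge> 0 \<or>
   (\<exists>k<l. Yw X l \<omega> \<ge> X 2 (Suc k) \<omega> + (\<Sum>j\<in>{Suc (Suc k)..l}. X 1 j \<omega>))"
proof (induction l)
  case (Suc l)
  show ?case
  proof (cases "Yw X l \<omega> < 0")
    case True
    then have step: "Yw X (Suc l) \<omega> = Yw X l \<omega> + X 1 (Suc l) \<omega>"
      by (simp add: Yw_Suc)
    from Suc.IH True obtain k where
      "k < l" and "Yw X l \<omega> \<ge> X 2 (Suc k) \<omega> + (\<Sum>j\<in>{Suc (Suc k)..l}. X 1 j \<omega>)"
      by auto
    then have "Yw X (Suc l) \<omega> \<ge> X 2 (Suc k) \<omega> + (\<Sum>j\<in>{Suc (Suc k)..Suc l}. X 1 j \<omega>)"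
      by (simp add: step)
    with \<open>k < l\<close> show ?thesis
      using less_SucI by blast
  next
    case False
    then have "Yw X (Suc l) \<omega> \<ge> X 2 (Suc l) \<omega> + (\<Sum>j\<in>{Suc (Suc l)..Suc l}. X 1 j \<omega>)"
      by (simp add: Yw_Suc)
    then show ?thesis
      by blast
  qed
qed simp

locale switching_walk = prob_space M
  for M :: "'a measure" +
  fixes X :: "nat \<Rightarrow> nat \<Rightarrow> 'a \<Rightarrow> real" and \<mu> :: "nat \<Rightarrow> real" and \<theta> a :: real
  assumes indep: "indep_vars (\<lambda>_. borel) (\<lambda>(b, l). X b l) ({1, 2} \<times> {1..})"
    and mgf: "\<And>b l s. b \<in> {1, 2} \<Longrightarrow> l \<ge> 1 \<Longrightarrow> s \<in> {1, -1} \<Longrightarrow>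
      (\<integral>\<^sup>+\<omega>. ennreal (exp (\<theta> * (s * X b l \<omega>))) \<partial>M) \<le> ennreal (exp (\<theta> * (s * \<mu> b)) * (1 + a))"
    and theta_pos: "\<theta> > 0"
    and a_ge: "a \<ge> 2.2" \<comment> \<open>from \<open>2.2\<close> on, \<open>exp A \<ge> 3 + 2 A\<close>\<close>
    and drift1: "a \<le> \<theta> * \<mu> 1"
    and drift2: "a \<le> - \<theta> * \<mu> 2"
begin

lemma X_measurable: "b \<in> {1, 2} \<Longrightarrow> l \<ge> 1 \<Longrightarrow> X b l \<in> borel_measurable M"
  using indep unfolding indep_vars_def by auto

lemma Yw_measurable: "Yw X l \<in> borel_measurable M"
proof (induction l)
  case (Suc n)
  have "X 1 (Suc n) \<in> borel_measurable M" "X 2 (Suc n) \<in> borel_measurable M"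
    by (simp_all add: X_measurable)
  with Suc.IH show ?case
    unfolding Yw_Suc[abs_def] by measurable
qed simp

lemma run_sum_measurable:
  assumes "b \<in> {1, 2}" "b' \<in> {1, 2}"
  shows "(\<lambda>\<omega>. s * (X b' (Suc k) \<omega> + (\<Sum>j\<in>{Suc (Suc k)..l}. X b j \<omega>))) \<in> borel_measurable M"
proof -
  have "X b' (Suc k) \<in> borel_measurable M" "\<And>j. j \<in> {Suc (Suc k)..l} \<Longrightarrow> X b j \<in> borel_measurable M"
    using assms by (auto intro: X_measurable)
  then show ?thesis
    by measurable
qed
lemma prob_run_sum_ge:
  assumes "b \<in> {1, 2}" "b' \<in> {1, 2}" "s \<in> {1, -1}"
  shows "prob {\<omega>\<in>space M. v \<le> s * (X b' (Suc k) \<omega> + (\<Sum>j\<in>{Suc (Suc k)..l}. X b j \<omega>))}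
    \<le> exp (- \<theta> * v) * (exp (\<theta> * (s * \<mu> b')) * (1 + a))
        * (exp (\<theta> * (s * \<mu> b)) * (1 + a)) ^ (l - Suc k)"
proof -
  define J where "J = insert (b', Suc k) ((\<lambda>j. (b, j)) ` {Suc (Suc k)..l})"
  define B where "B i = exp (\<theta> * (s * \<mu> (fst i))) * (1 + a)" for i :: "nat \<times> nat"
  have J: "finite J" "J \<subseteq> {1, 2} \<times> {1..}"
    using assms by (auto simp: J_def)
  have fresh: "(b', Suc k) \<notin> (\<lambda>j. (b, j)) ` {Suc (Suc k)..l}"
    by auto
  have inj: "inj_on (\<lambda>j. (b, j)) A" for A :: "nat set"
    by (simp add: inj_on_def)
  have "indep_vars (\<lambda>_. borel) (\<lambda>i \<omega>. s * X (fst i) (snd i) \<omega>) J"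
    using indep_vars_compose2[OF indep_vars_subset[OF indep J(2)], of "\<lambda>_ x. s * x" "\<lambda>_. borel"]
    by (simp add: case_prod_beta)
  then have "prob {\<omega>\<in>space M. v \<le> (\<Sum>i\<in>J. s * X (fst i) (snd i) \<omega>)} \<le> exp (- \<theta> * v) * (\<Prod>i\<in>J. B i)"
  proof (rule Chernoff_ineq_indep_sum[OF _ J(1) theta_pos])
    fix i assume "i \<in> J"
    then show "(\<integral>\<^sup>+\<omega>. ennreal (exp (\<theta> * (s * X (fst i) (snd i) \<omega>))) \<partial>M) \<le> ennreal (B i)"
      using J(2) mgf[OF _ _ \<open>s \<in> {1, -1}\<close>] by (auto simp: B_def)
  qed (use a_ge in \<open>simp add: B_def\<close>)
  moreover have "(\<Sum>i\<in>J. s * X (fst i) (snd i) \<omega>) = s * (X b' (Suc k) \<omega> + (\<Sum>j\<in>{Suc (Suc k)..l}. X b j \<omega>))"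
    for \<omega>
    by (simp add: J_def fresh sum.reindex inj sum_distrib_left distrib_left)
  moreover have "(\<Prod>i\<in>J. B i) = (exp (\<theta> * (s * \<mu> b')) * (1 + a)) * (exp (\<theta> * (s * \<mu> b)) * (1 + a)) ^ (l - Suc k)"
    by (simp add: J_def B_def fresh prod.reindex inj)
  ultimately show ?thesis
    by (simp add: mult.assoc)
qed

lemma prob_Yw_ge_le_geometric:
  assumes "l \<ge> 1"
  shows "prob {\<omega>\<in>space M. v \<le> Yw X l \<omega>}
    \<le> exp (- \<theta> * v) * ((exp (\<theta> * \<mu> 2) * (1 + a)) ^ l
        + exp (\<theta> * \<mu> 1) * (1 + a) * (\<Sum>k<l. (exp (\<theta> * \<mu> 2) * (1 + a)) ^ k))"
proof -
  define run where "run b' k = {\<omega>\<in>space M. v \<le> 1 * (X b' (Suc k) \<omega> + (\<Sum>j\<in>{Suc (Suc k)..l}. X 2 j \<omega>))}"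
    for b' k
  have run_sets: "run b' k \<in> sets M" if "b' \<in> {1, 2}" for b' k
    using run_sum_measurable[OF _ that] unfolding run_def by measurable
  have "{\<omega>\<in>space M. v \<le> Yw X l \<omega>} \<subseteq> run 2 0 \<union> (\<Union>k<l. run 1 k)"
  proof
    fix \<omega> assume \<omega>: "\<omega> \<in> {\<omega>\<in>space M. v \<le> Yw X l \<omega>}"
    have sum_split: "(\<Sum>j\<in>{1..l}. X 2 j \<omega>) = X 2 (Suc 0) \<omega> + (\<Sum>j\<in>{Suc (Suc 0)..l}. X 2 j \<omega>)"
      using assms by (simp add: sum.atLeast_Suc_atMost)
    with Yw_le_run_sum[of X l \<omega>] \<omega> show "\<omega> \<in> run 2 0 \<union> (\<Union>k<l. run 1 k)"
      unfolding run_def by (fastforce dest: order_trans)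
  qed
  then have "prob {\<omega>\<in>space M. v \<le> Yw X l \<omega>} \<le> prob (run 2 0 \<union> (\<Union>k<l. run 1 k))"
    using run_sets by (intro finite_measure_mono) auto
  also have "\<dots> \<le> prob (run 2 0) + prob (\<Union>k<l. run 1 k)"
    using run_sets by (intro measure_Un_le) auto
  also have "\<dots> \<le> prob (run 2 0) + (\<Sum>k<l. prob (run 1 k))"
    using run_sets by (intro add_left_mono finite_measure_subadditive_finite) auto
  also have "\<dots> \<le> exp (- \<theta> * v) * (exp (\<theta> * \<mu> 2) * (1 + a)) * (exp (\<theta> * \<mu> 2) * (1 + a)) ^ (l - 1)
      + (\<Sum>k<l. exp (- \<theta> * v) * (exp (\<theta> * \<mu> 1) * (1 + a)) * (exp (\<theta> * \<mu> 2) * (1 + a)) ^ (l - Suc k))"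
    using prob_run_sum_ge[of 2 2 1 v 0 l] prob_run_sum_ge[of 2 1 1 v _ l]
    unfolding run_def by (intro add_mono sum_mono) auto
  also have "\<dots> = exp (- \<theta> * v) * ((exp (\<theta> * \<mu> 2) * (1 + a)) ^ l
        + exp (\<theta> * \<mu> 1) * (1 + a) * (\<Sum>k<l. (exp (\<theta> * \<mu> 2) * (1 + a)) ^ k))"
  proof -
    have "e * q * q ^ (l - 1) + (\<Sum>k<l. e * p * q ^ (l - Suc k)) = e * (q ^ l + p * (\<Sum>k<l. q ^ k))"
      for e p q :: real
      using assms sum.nat_diff_reindex[of "\<lambda>k. q ^ k" l]
      by (simp add: sum_distrib_left[symmetric] algebra_simps power_Suc[symmetric] del: power_Suc)
    then show ?thesis
      by simp
  qed
  finally show ?thesis .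
qed

lemma prob_Yw_le_neg_le_geometric:
  assumes "v > 0"
  shows "prob {\<omega>\<in>space M. Yw X l \<omega> \<le> - v}
    \<le> exp (- \<theta> * v) * (exp (- \<theta> * \<mu> 2) * (1 + a) * (\<Sum>k<l. (exp (- \<theta> * \<mu> 1) * (1 + a)) ^ k))"
proof -
  define run where "run k = {\<omega>\<in>space M. v \<le> -1 * (X 2 (Suc k) \<omega> + (\<Sum>j\<in>{Suc (Suc k)..l}. X 1 j \<omega>))}"
    for k
  have run_sets: "run k \<in> sets M" for k
    using run_sum_measurable[of 1 2] unfolding run_def by measurable
  have "{\<omega>\<in>space M. Yw X l \<omega> \<le> - v} \<subseteq> (\<Union>k<l. run k)"
  proof
    fix \<omega> assume \<omega>: "\<omega> \<in> {\<omega>\<in>space M. Yw X l \<omega> \<le> - v}"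
    with \<open>v > 0\<close> have "\<not> Yw X l \<omega> \<ge> 0"
      by auto
    with Yw_ge_run_sum[of X l \<omega>] obtain k where
      "k < l" "Yw X l \<omega> \<ge> X 2 (Suc k) \<omega> + (\<Sum>j\<in>{Suc (Suc k)..l}. X 1 j \<omega>)"
      by blast
    with \<omega> have "\<omega> \<in> run k"
      by (simp add: run_def)
    with \<open>k < l\<close> show "\<omega> \<in> (\<Union>k<l. run k)"
      by blast
  qed
  then have "prob {\<omega>\<in>space M. Yw X l \<omega> \<le> - v} \<le> prob (\<Union>k<l. run k)"
    using run_sets by (intro finite_measure_mono) auto
  also have "\<dots> \<le> (\<Sum>k<l. prob (run k))"
    using run_sets by (intro finite_measure_subadditive_finite) auto
  also have "\<dots> \<le> (\<Sum>k<l. exp (- \<theta> * v) * (exp (- \<theta> * \<mu> 2) * (1 + a)) * (exp (- \<theta> * \<mu> 1) * (1 + a)) ^ (l - Suc k))"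
    using prob_run_sum_ge[of 1 2 "-1" v _ l] unfolding run_def by (intro sum_mono) auto
  also have "\<dots> = exp (- \<theta> * v) * (exp (- \<theta> * \<mu> 2) * (1 + a) * (\<Sum>k<l. (exp (- \<theta> * \<mu> 1) * (1 + a)) ^ k))"
    using sum.nat_diff_reindex[of "\<lambda>k. (exp (- \<theta> * \<mu> 1) * (1 + a)) ^ k" l]
    by (simp add: sum_distrib_left[symmetric] mult.assoc)
  finally show ?thesis .
qed

lemma geometric_sum_drift_le:
  assumes "a \<le> A"
  shows "exp (- A) * (1 + a) < 1" and "(1 + a) * (\<Sum>k<l. (exp (- A) * (1 + a)) ^ k) \<le> exp A - 1"
proof -
  have "3 + 2 * a \<le> exp A"
    using exp_ge_3_add_double_self[of A] a_ge assms by linarith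
  moreover have "exp (- A) * (1 + a) = (1 + a) / exp A"
    by (simp add: exp_minus field_simps)
  ultimately show "exp (- A) * (1 + a) < 1" "(1 + a) * (\<Sum>k<l. (exp (- A) * (1 + a)) ^ k) \<le> exp A - 1"
    using geometric_sum_le_of_ge_3_add_double[of a "exp A"] a_ge by simp_all
qed

lemma prob_Yw_ge_le:
  assumes "l \<ge> 1"
  shows "prob {\<omega>\<in>space M. v \<le> Yw X l \<omega>} \<le> exp (- \<theta> * (v - \<mu> 1 + \<mu> 2))"
proof -
  define q where "q = exp (\<theta> * \<mu> 2) * (1 + a)"
  have q: "0 \<le> q" "q \<le> 1" "(1 + a) * (\<Sum>k<l. q ^ k) \<le> exp (- \<theta> * \<mu> 2) - 1"
    using geometric_sum_drift_le(1)[OF drift2] geometric_sum_drift_le(2)[OF drift2, of l] a_ge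
    by (auto simp: q_def)
  have "(q ^ l + exp (\<theta> * \<mu> 1) * (1 + a) * (\<Sum>k<l. q ^ k))
      \<le> 1 + exp (\<theta> * \<mu> 1) * (exp (- \<theta> * \<mu> 2) - 1)"
    using q by (intro add_mono power_le_one) (auto simp: mult.assoc intro!: mult_left_mono)
  also have "\<dots> \<le> exp (\<theta> * \<mu> 1) * exp (- \<theta> * \<mu> 2)"
    using drift1 a_ge by (simp add: algebra_simps)
  finally have "exp (- \<theta> * v) * (q ^ l + exp (\<theta> * \<mu> 1) * (1 + a) * (\<Sum>k<l. q ^ k))
      \<le> exp (- \<theta> * v) * (exp (\<theta> * \<mu> 1) * exp (- \<theta> * \<mu> 2))"
    by (simp add: mult_left_mono)
  with prob_Yw_ge_le_geometric[OF assms, of v] show ?thesis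
    by (simp add: q_def algebra_simps flip: exp_add)
qed

lemma prob_Yw_le_neg_le:
  assumes "v > 0"
  shows "prob {\<omega>\<in>space M. Yw X l \<omega> \<le> - v} \<le> exp (- \<theta> * (v - \<mu> 1 + \<mu> 2))"
proof -
  have "exp (- \<theta> * \<mu> 2) * ((1 + a) * (\<Sum>k<l. (exp (- \<theta> * \<mu> 1) * (1 + a)) ^ k))
      \<le> exp (- \<theta> * \<mu> 2) * exp (\<theta> * \<mu> 1)"
    using geometric_sum_drift_le(2)[OF drift1, of l] by (intro mult_left_mono) auto
  then have "exp (- \<theta> * v) * (exp (- \<theta> * \<mu> 2) * (1 + a) * (\<Sum>k<l. (exp (- \<theta> * \<mu> 1) * (1 + a)) ^ k))
      \<le> exp (- \<theta> * v) * (exp (- \<theta> * \<mu> 2) * exp (\<theta> * \<mu> 1))"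
    by (simp add: mult_left_mono mult.assoc)
  with prob_Yw_le_neg_le_geometric[OF assms, of l] show ?thesis
    by (simp add: algebra_simps flip: exp_add)
qed

lemma prob_abs_Yw_ge_le:
  assumes "l \<ge> 1"
  shows "prob {\<omega>\<in>space M. \<bar>Yw X l \<omega>\<bar> \<ge> v} \<le> 2 * exp (- \<theta> * (v - \<mu> 1 + \<mu> 2))"
proof (cases "v \<le> \<mu> 1 - \<mu> 2")
  case True
  then have "1 \<le> exp (- \<theta> * (v - \<mu> 1 + \<mu> 2))"
    using theta_pos by (simp add: mult_nonneg_nonpos)
  then show ?thesis
    using prob_le_1[of "{\<omega>\<in>space M. \<bar>Yw X l \<omega>\<bar> \<ge> v}"] by linarith
next
  case False
  have "0 < \<theta> * \<mu> 1" "\<theta> * \<mu> 2 < 0"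
    using drift1 drift2 a_ge by linarith+
  with False have "v > 0"
    using theta_pos by (simp add: zero_less_mult_iff mult_less_0_iff)
  have sets: "{\<omega>\<in>space M. v \<le> Yw X l \<omega>} \<in> sets M" "{\<omega>\<in>space M. Yw X l \<omega> \<le> - v} \<in> sets M"
    using Yw_measurable[of l] by measurable
  have "{\<omega>\<in>space M. \<bar>Yw X l \<omega>\<bar> \<ge> v} = {\<omega>\<in>space M. v \<le> Yw X l \<omega>} \<union> {\<omega>\<in>space M. Yw X l \<omega> \<le> - v}"
    by auto
  then have "prob {\<omega>\<in>space M. \<bar>Yw X l \<omega>\<bar> \<ge> v}
      \<le> prob {\<omega>\<in>space M. v \<le> Yw X l \<omega>} + prob {\<omega>\<in>space M. Yw X l \<omega> \<le> - v}"
    using measure_Un_le[OF sets] by simp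
  then show ?thesis
    using prob_Yw_ge_le[OF assms, of v] prob_Yw_le_neg_le[OF \<open>v > 0\<close>, of l] by linarith
qed

end

theorem lemma4:
  fixes M :: "'a measure" and X :: "nat \<Rightarrow> nat \<Rightarrow> 'a \<Rightarrow> real"
    and \<mu>1 \<mu>2 \<beta> c :: real
  assumes "prob_space M"
    and indep: "prob_space.indep_vars M (\<lambda>_. borel) (\<lambda>(b, l). X b l) ({1, 2} \<times> {1..})"
    and integ: "\<And>b l. b \<in> {1, 2} \<Longrightarrow> l \<ge> 1 \<Longrightarrow> integrable M (X b l)"
    and mean1: "\<And>l. l \<ge> 1 \<Longrightarrow> integral\<^sup>L M (X 1 l) = \<mu>1"
    and mean2: "\<And>l. l \<ge> 1 \<Longrightarrow> integral\<^sup>L M (X 2 l) = \<mu>2"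
    and "\<mu>1 > 0" and "\<mu>2 < 0"
    and "\<beta> > 0"
    and up: "\<And>b l v. b \<in> {1, 2} \<Longrightarrow> l \<ge> 1 \<Longrightarrow>
       measure M {\<omega> \<in> space M. X b l \<omega> \<ge> v}
         \<le> exp (- \<beta> * (max 0 (v - (if b = 1 then \<mu>1 else \<mu>2)))\<^sup>2)"
    and low: "\<And>b l v. b \<in> {1, 2} \<Longrightarrow> l \<ge> 1 \<Longrightarrow>
       measure M {\<omega> \<in> space M. X b l \<omega> \<le> v}
         \<le> exp (- \<beta> * (max 0 ((if b = 1 then \<mu>1 else \<mu>2) - v))\<^sup>2)"
    and "c \<ge> 1"
    and "min \<mu>1 (- \<mu>2) \<ge> sqrt (pi / \<beta>) * exp (c\<^sup>2 / 4)"
  shows "\<forall>l \<ge> 1. \<forall>v::real.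
     measure M {\<omega> \<in> space M. \<bar>Yw X l \<omega>\<bar> \<ge> v}
       \<le> 2 * exp (- c * sqrt \<beta> * (v - \<mu>1 + \<mu>2))"
proof -
  interpret prob_space M by fact
  define \<theta> where "\<theta> = c * sqrt \<beta>"
  define a where "a = \<theta> * sqrt (pi / \<beta>) * exp (\<theta>\<^sup>2 / (4 * \<beta>))"
  define \<mu> where "\<mu> b = (if b = 1 then \<mu>1 else \<mu>2)" for b :: nat
  have \<theta>: "\<theta> > 0"
    using \<open>c \<ge> 1\<close> \<open>\<beta> > 0\<close> by (simp add: \<theta>_def)
  have a: "a = \<theta> * (sqrt (pi / \<beta>) * exp (c\<^sup>2 / 4))" "a = c * sqrt pi * exp (c\<^sup>2 / 4)"
    using \<open>\<beta> > 0\<close> by (simp_all add: a_def \<theta>_def power_mult_distrib real_sqrt_divide)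
  interpret switching_walk M X \<mu> \<theta> a
  proof
    fix b l :: nat and s :: real
    assume "b \<in> {1, 2}" "l \<ge> 1" "s \<in> {1, -1}"
    moreover have "X b l \<in> borel_measurable M"
      using indep \<open>b \<in> {1, 2}\<close> \<open>l \<ge> 1\<close> unfolding indep_vars_def by auto
    ultimately show "(\<integral>\<^sup>+\<omega>. ennreal (exp (\<theta> * (s * X b l \<omega>))) \<partial>M) \<le> ennreal (exp (\<theta> * (s * \<mu> b)) * (1 + a))"
      unfolding a_def \<mu>_def
      by (intro nn_integral_exp_le_of_two_sided_subgaussian_tail \<open>\<beta> > 0\<close> \<theta> up low)
  next
    show "a \<ge> 2.2"
      using mult_sqrt_pi_exp_square_ge[OF \<open>c \<ge> 1\<close>] a(2) by simp
    show "a \<le> \<theta> * \<mu> 1" "a \<le> - \<theta> * \<mu> 2"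
      using \<open>min \<mu>1 (- \<mu>2) \<ge> _\<close> \<theta> mult_left_mono[of _ "- \<mu>2" \<theta>]
      by (simp_all add: a(1) \<mu>_def)
  qed (use indep \<theta> in auto)
  show ?thesis
    using prob_abs_Yw_ge_le by (simp add: \<theta>_def \<mu>_def)
qed

end
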